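(* Let $Q_1,\ldots,Q_m\in\mathbb R^{n\times n}$ be symmetric positive semidefinite, $a_{ij}\in\{-1,0,1\}$, $b_i\in\mathbb R^n$, $c_i\in\mathbb R$ for $i=0,1,\ldots,p$, $j=1,\ldots,m$, and $u_i\in\mathbb R$ for $i=1,\ldots,p$. Let $g_i(x)=\sum_{j=1}^m a_{ij}x^TQ_jx+2b_i^Tx+c_i$ and consider \[ ({\rm QCQP_1})\quad \min_{x\in\mathbb R^n}\ g_0(x)\quad\text{s.t.}\quad g_i(x)\le u_i,\ i=1,\ldots,p. \] Let $J=\{j\in\{1,\ldots,m\}:\ a_{ij}=-1\text{ for some } i\in\{0,1,\ldots,p\}\}$, and consider the convex relaxation \[ ({\rm CR})\quad \min_{x,\,t_j(j\in J)}\ \sum_{j\notin J}a_{0j}x^TQ_jx+\sum_{j\in J}a_{0j}t_j+2b_0^Tx+c_0 \] \[ \text{s.t.}\quad \sum_{j\notin J}a_{ij}x^TQ_jx+\sum_{j\in J}a_{ij}t_j+2b_i^Tx+c_i\le u_i,\ i=1,\ldots,p,\qquad \left\|\begin{pmatrix}Q_j^{1/2}x\\ \frac{t_j-1}{2}\end{pmatrix}\right\|\le\frac{t_j+1}{2},\ j\in J. \] Suppose \[ \max_{j\in J}\ \dim\Big({\rm span}\Big(\{b_1,\ldots,b_p\}\cup\mathcal N(Q_j)\cup\bigcup_{i\in\{1,\ldots,m\},\,i\ne j}\mathcal R(Q_i)\Big)\Big)\le n-1, \] and $v({\rm CR})>-\infty$. Then $({\rm QCQP_1})$ is equivalent to (CR),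 in the sense that $x^*$ globally solves $({\rm QCQP_1})$ if and only if $(x^*,t^*_j(j\in J)):=(x^*,x^{*T}Q_jx^*(j\in J))$ globally solves (CR).
   Context: $\mathcal N(Q)$ and $\mathcal R(Q)$ denote the null space and range of a matrix $Q$; $Q^{1/2}$ is the positive semidefinite square root; $v(\cdot)$ denotes the optimal value; $\|\cdot\|$ is the Euclidean norm. (QCQP$_1$) is the one-sided case (lower bounds $l_i=-\infty$) of the quadratic program with constraints $l_i\le g_i(x)\le u_i$. *)

theory Defs
  imports "HOL-Analysis.Analysis"
begin

definition sym_psd :: "real^'n^'n \<Rightarrow> bool" where
  "sym_psd Q \<longleftrightarrow> transpose Q = Q \<and> (\<forall>x. 0 \<le> x \<bullet> (Q *v x))"

definition psd_sqrt :: "real^'n^'n \<Rightarrow> real^'n^'n" where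
  "psd_sqrt Q = (THE S. sym_psd S \<and> S ** S = Q)"

definition null_sp :: "real^'n^'n \<Rightarrow> (real^'n) set" where
  "null_sp Q = {x. Q *v x = 0}"

definition range_sp :: "real^'n^'n \<Rightarrow> (real^'n) set" where
  "range_sp Q = range (\<lambda>x. Q *v x)"

definition qform :: "real^'n^'n \<Rightarrow> real^'n \<Rightarrow> real" where
  "qform Q x = x \<bullet> (Q *v x)"

definition gfun :: "nat \<Rightarrow> (nat \<Rightarrow> nat \<Rightarrow> real) \<Rightarrow> (nat \<Rightarrow> real^'n^'n) \<Rightarrow>
    (nat \<Rightarrow> real^'n) \<Rightarrow> (nat \<Rightarrow> real) \<Rightarrow> nat \<Rightarrow> real^'n \<Rightarrow> real" where
  "gfun m a Q b c i x = (\<Sum>j=1..m. a i j * qform (Q j) x) + 2 * (b i \<bullet> x) + c i"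

definition Jset :: "nat \<Rightarrow> nat \<Rightarrow> (nat \<Rightarrow> nat \<Rightarrow> real) \<Rightarrow> nat set" where
  "Jset m p a = {j \<in> {1..m}. \<exists>i \<in> {0..p}. a i j = -1}"

definition qcqp_feasible where
  "qcqp_feasible m p a Q b c u x \<longleftrightarrow> (\<forall>i\<in>{1..p}. gfun m a Q b c i x \<le> u i)"

definition qcqp_solves where
  "qcqp_solves m p a Q b c u xs \<longleftrightarrow> qcqp_feasible m p a Q b c u xs \<and>
     (\<forall>x. qcqp_feasible m p a Q b c u x \<longrightarrow> gfun m a Q b c 0 xs \<le> gfun m a Q b c 0 x)"

text \<open>(CR): the relaxed functions; variables t_j are only used for j in J.\<close>
definition crfun :: "nat \<Rightarrow> nat \<Rightarrow> (nat \<Rightarrow> nat \<Rightarrow> real) \<Rightarrow> (nat \<Rightarrow> real^'n^'n) \<Rightarrow>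
    (nat \<Rightarrow> real^'n) \<Rightarrow> (nat \<Rightarrow> real) \<Rightarrow> nat \<Rightarrow> real^'n \<Rightarrow> (nat \<Rightarrow> real) \<Rightarrow> real" where
  "crfun m p a Q b c i x t =
     (\<Sum>j\<in>{1..m} - Jset m p a. a i j * qform (Q j) x) + (\<Sum>j\<in>Jset m p a. a i j * t j)
     + 2 * (b i \<bullet> x) + c i"

definition cr_feasible where
  "cr_feasible m p a Q b c u x t \<longleftrightarrow>
     (\<forall>i\<in>{1..p}. crfun m p a Q b c i x t \<le> u i) \<and>
     (\<forall>j\<in>Jset m p a. sqrt ((norm (psd_sqrt (Q j) *v x))\<^sup>2 + ((t j - 1) / 2)\<^sup>2) \<le> (t j + 1) / 2)"

definition cr_solves where
  "cr_solves m p a Q b c u xs ts \<longleftrightarrow> cr_feasible m p a Q b c u xs ts \<and>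
     (\<forall>x t. cr_feasible m p a Q b c u x t \<longrightarrow> crfun m p a Q b c 0 xs ts \<le> crfun m p a Q b c 0 x t)"

text \<open>Optimal value v(CR) (extended real; +\<infinity> if infeasible).\<close>
definition cr_value :: "nat \<Rightarrow> nat \<Rightarrow> (nat \<Rightarrow> nat \<Rightarrow> real) \<Rightarrow> (nat \<Rightarrow> real^'n^'n) \<Rightarrow>
    (nat \<Rightarrow> real^'n) \<Rightarrow> (nat \<Rightarrow> real) \<Rightarrow> (nat \<Rightarrow> real) \<Rightarrow> ereal" where
  "cr_value m p a Q b c u =
     (INF xt \<in> {(x, t). cr_feasible m p a Q b c u x t}. ereal (crfun m p a Q b c 0 (fst xt) (snd xt)))"

end

theory Submission
  imports Defs
begin

text \<open>
  The relaxation (CR) only replaces the equations t_j = x^T Q_j x by the inequalities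
  x^T Q_j x <= t_j: this is what the cone constraints say once |Q_j^(1/2) x|^2 = x^T Q_j x
  is known, which needs existence and uniqueness of PSD square roots, hence the spectral
  theorem. Conversely, the dimension condition yields for each j in J a direction d_j
  orthogonal to all b_i, killed by every Q_i with i ~= j, but not by Q_j. Moving a
  CR-feasible x along d_j changes only the j-th quadratic form, which can thus be raised
  to t_j exactly; choosing the sign of the step so that b_0^T x does not grow gives a
  feasible point of (QCQP_1) that is no worse.
\<close>

section \<open>Spectral theorem for symmetric matrices\<close>

lemma inner_matrix_vector_mult_symmetric:
  fixes A :: "real^'n^'n"
  assumes "transpose A = A"
  shows "x \<bullet> (A *v y) = (A *v x) \<bullet> y"
  by (metis assms dot_lmul_matrix inner_commute vector_transpose_matrix)

lemma symmetric_matrix_iff_self_adjoint: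
  fixes A :: "real^'n^'n"
  shows "transpose A = A \<longleftrightarrow> (\<forall>x y. x \<bullet> (A *v y) = (A *v x) \<bullet> y)"
proof
  assume "\<forall>x y. x \<bullet> (A *v y) = (A *v x) \<bullet> y"
  then have "adjoint (\<lambda>x. A *v x) = (\<lambda>x. A *v x)"
    by (intro adjoint_unique) simp
  then have "\<forall>x. transpose A *v x = A *v x"
    by (metis adjoint_matrix)
  then show "transpose A = A"
    by (simp add: matrix_eq)
qed (use inner_matrix_vector_mult_symmetric in blast)

lemma eq_0_if_linear_le_quadratic:
  fixes a C :: real
  assumes "\<And>s. 2 * s * a \<le> s\<^sup>2 * C"
  shows "a = 0"
proof -
  define K where "K = \<bar>C\<bar> + 1"
  have K: "K > 0" "2 * K - C > 0" unfolding K_def by auto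
  have "2 * (a / K) * a \<le> (a / K)\<^sup>2 * C" using assms .
  then have "a\<^sup>2 * (2 * K - C) \<le> 0"
    using K by (simp add: field_simps power2_eq_square)
  then show ?thesis using K by (simp add: mult_le_0_iff)
qed

lemma inner_symmetric_add_scaleR:
  fixes A :: "real^'n^'n"
  assumes "transpose A = A"
  shows "(x + s *\<^sub>R y) \<bullet> (A *v (x + s *\<^sub>R y))
           = x \<bullet> (A *v x) + 2 * s * (y \<bullet> (A *v x)) + s\<^sup>2 * (y \<bullet> (A *v y))"
proof -
  have "x \<bullet> (A *v y) = y \<bullet> (A *v x)"
    using inner_matrix_vector_mult_symmetric[OF assms] by (simp add: inner_commute)
  then show ?thesis
    by (simp add: matrix_vector_right_distrib inner_add_left inner_add_right
        matrix_vector_mult_scaleR power2_eq_square algebra_simps)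
qed

lemma sym_psd_kernel:
  fixes A :: "real^'n^'n"
  assumes "sym_psd A" and "x \<bullet> (A *v x) = 0"
  shows "A *v x = 0"
proof -
  have sym: "transpose A = A" and psd: "\<And>z. 0 \<le> z \<bullet> (A *v z)"
    using assms(1) by (auto simp: sym_psd_def)
  have "y \<bullet> (A *v x) = 0" for y
  proof (rule eq_0_if_linear_le_quadratic)
    fix s :: real
    have "0 \<le> (x + (-s) *\<^sub>R y) \<bullet> (A *v (x + (-s) *\<^sub>R y))" by (rule psd)
    then show "2 * s * (y \<bullet> (A *v x)) \<le> s\<^sup>2 * (y \<bullet> (A *v y))"
      unfolding inner_symmetric_add_scaleR[OF sym] using assms(2) by simp
  qed
  from this[of "A *v x"] show ?thesis by simp
qed

lemma rayleigh_maximizer_exists: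
  fixes A :: "real^'n^'n"
  assumes "subspace V" "V \<noteq> {0}"
  obtains x where "x \<in> V" "norm x = 1" "\<And>y. y \<in> V \<Longrightarrow> y \<bullet> (A *v y) \<le> (x \<bullet> (A *v x)) * (y \<bullet> y)"
proof -
  let ?S = "V \<inter> sphere 0 1"
  have compact: "compact ?S"
    using closed_subspace[OF assms(1)] by (simp add: closed_Int_compact)
  obtain v where "v \<in> V" "v \<noteq> 0" using assms subspace_0 by blast
  then have "v /\<^sub>R norm v \<in> ?S" using assms(1) by (simp add: subspace_scale)
  then have nonempty: "?S \<noteq> {}" by blast
  have cont: "continuous_on ?S (\<lambda>x. x \<bullet> (A *v x))"
    by (intro continuous_intros matrix_vector_mult_linear_continuous_on[THEN continuous_on_subset]) auto
  obtain x where x: "x \<in> ?S" and max: "\<And>y. y \<in> ?S \<Longrightarrow> y \<bullet> (A *v y) \<le> x \<bullet> (A *v x)"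
    using continuous_attains_sup[OF compact nonempty cont] by blast
  have "y \<bullet> (A *v y) \<le> (x \<bullet> (A *v x)) * (y \<bullet> y)" if "y \<in> V" for y
  proof (cases "y = 0")
    case False
    then have "y /\<^sub>R norm y \<in> ?S" using that assms(1) by (simp add: subspace_scale)
    then have "(y /\<^sub>R norm y) \<bullet> (A *v (y /\<^sub>R norm y)) \<le> x \<bullet> (A *v x)"
      by (rule max)
    then have "(y \<bullet> (A *v y)) / (norm y)\<^sup>2 \<le> x \<bullet> (A *v x)"
      by (simp add: matrix_vector_mult_scaleR power2_eq_square divide_inverse mult_ac)
    then show ?thesis
      using False by (simp add: field_simps power2_norm_eq_inner)
  qed simp
  with x that show thesis by auto
qed

lemma rayleigh_maximizer_is_eigenvector:
  fixes A :: "real^'n^'n"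
  assumes sym: "transpose A = A" and V: "subspace V" and inv: "\<And>y. y \<in> V \<Longrightarrow> A *v y \<in> V"
    and x: "x \<in> V" "norm x = 1"
    and max: "\<And>y. y \<in> V \<Longrightarrow> y \<bullet> (A *v y) \<le> (x \<bullet> (A *v x)) * (y \<bullet> y)"
  shows "A *v x = (x \<bullet> (A *v x)) *\<^sub>R x"
proof -
  define l where "l = x \<bullet> (A *v x)"
  have xx: "x \<bullet> x = 1" using x(2) by (simp add: norm_eq_1)
  have "z \<bullet> (A *v x) - l * (x \<bullet> z) = 0" if z: "z \<in> V" for z
  proof (rule eq_0_if_linear_le_quadratic[where C = "l * (z \<bullet> z) - z \<bullet> (A *v z)"])
    fix s :: real
    have "x + s *\<^sub>R z \<in> V" using x z V by (simp add: subspace_add subspace_scale)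
    then have "(x + s *\<^sub>R z) \<bullet> (A *v (x + s *\<^sub>R z)) \<le> l * ((x + s *\<^sub>R z) \<bullet> (x + s *\<^sub>R z))"
      unfolding l_def by (rule max)
    then show "2 * s * (z \<bullet> (A *v x) - l * (x \<bullet> z)) \<le> s\<^sup>2 * (l * (z \<bullet> z) - z \<bullet> (A *v z))"
      unfolding inner_symmetric_add_scaleR[OF sym] l_def[symmetric]
      by (simp add: xx inner_add_left inner_add_right inner_commute power2_eq_square algebra_simps)
  qed
  moreover have "A *v x - l *\<^sub>R x \<in> V" using inv x V by (simp add: subspace_diff subspace_scale)
  ultimately have "(A *v x - l *\<^sub>R x) \<bullet> (A *v x - l *\<^sub>R x) = 0"
    by (metis (no_types, lifting) inner_commute inner_diff_right inner_scaleR_right)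
  then show ?thesis unfolding l_def by simp
qed

lemma span_insert_unit_orthogonal_complement:
  assumes V: "subspace V" and x: "x \<in> V" "x \<bullet> x = 1"
    and B: "span B = V \<inter> {y. x \<bullet> y = 0}"
  shows "span (insert x B) = V"
proof
  have "insert x B \<subseteq> V"
    using x(1) B span_superset[of B] by blast
  then show "span (insert x B) \<subseteq> V"
    using V by (simp add: span_minimal)
  show "V \<subseteq> span (insert x B)"
  proof
    fix v assume "v \<in> V"
    then have "v - (x \<bullet> v) *\<^sub>R x \<in> span B"
      using V x unfolding B by (simp add: subspace_diff subspace_scale inner_diff_right)
    then show "v \<in> span (insert x B)" by (auto simp: span_insert)
  qed
qed

lemma symmetric_matrix_eigenbasis_subspace:
  fixes A :: "real^'n^'n"
  assumes sym: "transpose A = A"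
  shows "subspace V \<Longrightarrow> (\<And>y. y \<in> V \<Longrightarrow> A *v y \<in> V) \<Longrightarrow>
    \<exists>B. finite B \<and> span B = V \<and> pairwise orthogonal B \<and>
        (\<forall>v\<in>B. norm v = 1 \<and> A *v v = (v \<bullet> (A *v v)) *\<^sub>R v)"
proof (induction "dim V" arbitrary: V rule: less_induct)
  case less
  show ?case
  proof (cases "V = {0}")
    case True
    then show ?thesis by (intro exI[of _ "{}"]) auto
  next
    case False
    obtain x where x: "x \<in> V" "norm x = 1"
      and max: "\<And>y. y \<in> V \<Longrightarrow> y \<bullet> (A *v y) \<le> (x \<bullet> (A *v x)) * (y \<bullet> y)"
      using rayleigh_maximizer_exists[OF less.prems(1) False] by blast
    have eig: "A *v x = (x \<bullet> (A *v x)) *\<^sub>R x"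
      using rayleigh_maximizer_is_eigenvector[OF sym less.prems x max] .
    have xx: "x \<bullet> x = 1" using x(2) by (simp add: norm_eq_1)
    define W where "W = V \<inter> {y. x \<bullet> y = 0}"
    have W: "subspace W"
      unfolding W_def by (intro subspace_inter less.prems(1) subspace_hyperplane)
    have invW: "A *v y \<in> W" if "y \<in> W" for y
    proof -
      have "x \<bullet> (A *v y) = (A *v x) \<bullet> y" by (rule inner_matrix_vector_mult_symmetric[OF sym])
      also have "\<dots> = 0" using that unfolding W_def by (subst eig) simp
      finally show ?thesis using that less.prems(2) unfolding W_def by auto
    qed
    have "x \<notin> W" using xx unfolding W_def by simp
    then have "W \<subset> V" using x(1) unfolding W_def by blast
    then have "dim W < dim V"
      using W less.prems(1) by (metis dim_psubset span_eq_iff)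
    then obtain B where B: "finite B" "span B = W" "pairwise orthogonal B"
        "\<forall>v\<in>B. norm v = 1 \<and> A *v v = (v \<bullet> (A *v v)) *\<^sub>R v"
      using less.hyps[OF _ W invW] by blast
    have xB: "x \<bullet> v = 0" if "v \<in> B" for v
      using that B(2) span_superset unfolding W_def by blast
    have "span (insert x B) = V"
      using span_insert_unit_orthogonal_complement[OF less.prems(1) x(1) xx] B(2)
      unfolding W_def by blast
    moreover have "pairwise orthogonal (insert x B)"
      using B(3) xB by (auto simp: pairwise_insert orthogonal_def inner_commute)
    ultimately show ?thesis
      using B x(2) eig by (intro exI[of _ "insert x B"]) auto
  qed
qed

lemma symmetric_matrix_eigenbasis:
  fixes A :: "real^'n^'n"
  assumes "transpose A = A"
  obtains B where "finite B" "span B = UNIV" "pairwise orthogonal B" "\<And>v. v \<in> B \<Longrightarrow> norm v = 1"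
    "\<And>v. v \<in> B \<Longrightarrow> A *v v = (v \<bullet> (A *v v)) *\<^sub>R v"
  using symmetric_matrix_eigenbasis_subspace[OF assms subspace_UNIV] by auto

section \<open>Positive semidefinite square roots\<close>

lemma matrix_eq_on_spanning_set:
  fixes A C :: "real^'n^'m"
  assumes "span B = UNIV" "\<And>v. v \<in> B \<Longrightarrow> A *v v = C *v v"
  shows "A = C"
  using real_vector.linear_eq_on_span[OF matrix_vector_mul_linear matrix_vector_mul_linear assms(2)]
    assms(1) by (simp add: matrix_eq)

lemma symmetric_matrix_with_orthonormal_eigenvectors:
  fixes B :: "(real^'n) set"
  assumes B: "finite B" "pairwise orthogonal B" "\<And>v. v \<in> B \<Longrightarrow> norm v = 1"
  obtains S :: "real^'n^'n" where "transpose S = S"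
    "\<And>w. w \<bullet> (S *v w) = (\<Sum>v\<in>B. r v * (v \<bullet> w)\<^sup>2)" "\<And>v. v \<in> B \<Longrightarrow> S *v v = r v *\<^sub>R v"
proof
  define f where "f w = (\<Sum>v\<in>B. (r v * (v \<bullet> w)) *\<^sub>R v)" for w
  have "linear f"
    unfolding f_def by (intro linear_compose_sum ballI bounded_linear.linear bounded_linear_intros)
  then have S: "matrix f *v w = f w" for w
    by (simp add: matrix_works linear_matrix_vector_mul_eq)
  have inner_f: "x \<bullet> f y = (\<Sum>v\<in>B. r v * (v \<bullet> x) * (v \<bullet> y))" for x y
    by (simp add: f_def inner_sum_right inner_commute mult_ac)
  show "transpose (matrix f) = matrix f"
    unfolding symmetric_matrix_iff_self_adjoint S
    by (simp only: inner_commute[of "f _"] inner_f) (simp add: mult_ac)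
  show "w \<bullet> (matrix f *v w) = (\<Sum>v\<in>B. r v * (v \<bullet> w)\<^sup>2)" for w
    unfolding S inner_f by (simp add: power2_eq_square mult.assoc)
  show "matrix f *v u = r u *\<^sub>R u" if "u \<in> B" for u
  proof -
    have "f u = (\<Sum>v\<in>B. if v = u then r u *\<^sub>R u else 0)"
      unfolding f_def using B that
      by (intro sum.cong) (auto simp: pairwise_def orthogonal_def norm_eq_1 inner_commute)
    then show ?thesis using B(1) that by (simp add: S)
  qed
qed

lemma sym_psd_sqrt_exists:
  fixes Q :: "real^'n^'n"
  assumes "sym_psd Q"
  shows "\<exists>S. sym_psd S \<and> S ** S = Q"
proof -
  have sym: "transpose Q = Q" and psd: "\<And>x. 0 \<le> x \<bullet> (Q *v x)"
    using assms by (auto simp: sym_psd_def)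
  obtain B where B: "finite B" "span B = UNIV" "pairwise orthogonal B" "\<And>v. v \<in> B \<Longrightarrow> norm v = 1"
    and eig: "\<And>v. v \<in> B \<Longrightarrow> Q *v v = (v \<bullet> (Q *v v)) *\<^sub>R v"
    using symmetric_matrix_eigenbasis[OF sym] by blast
  obtain S where S: "transpose S = S"
    "\<And>w. w \<bullet> (S *v w) = (\<Sum>v\<in>B. sqrt (v \<bullet> (Q *v v)) * (v \<bullet> w)\<^sup>2)"
    "\<And>v. v \<in> B \<Longrightarrow> S *v v = sqrt (v \<bullet> (Q *v v)) *\<^sub>R v"
    using symmetric_matrix_with_orthonormal_eigenvectors[OF B(1,3,4), of "\<lambda>v. sqrt (v \<bullet> (Q *v v))"]
    by blast
  have "(S ** S) *v v = Q *v v" if v: "v \<in> B" for v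
  proof -
    have "(S ** S) *v v = (sqrt (v \<bullet> (Q *v v)) * sqrt (v \<bullet> (Q *v v))) *\<^sub>R v"
      by (simp add: S(3)[OF v] matrix_vector_mult_scaleR flip: matrix_vector_mul_assoc)
    also have "\<dots> = Q *v v"
      by (subst (2) eig[OF v]) (simp add: psd)
    finally show ?thesis .
  qed
  then have "S ** S = Q" by (rule matrix_eq_on_spanning_set[OF B(2)])
  moreover have "0 \<le> w \<bullet> (S *v w)" for w
    unfolding S(2) by (intro sum_nonneg) (simp add: psd)
  ultimately show ?thesis using S(1) unfolding sym_psd_def by blast
qed

lemma sym_psd_sqrt_on_eigenvector:
  fixes S :: "real^'n^'n"
  assumes S: "sym_psd S" and eig: "(S ** S) *v v = l *\<^sub>R v"
  shows "S *v v = sqrt l *\<^sub>R v"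
proof -
  have sym: "transpose S = S" and psd: "\<And>x. 0 \<le> x \<bullet> (S *v x)"
    using S by (auto simp: sym_psd_def)
  have SS: "S *v (S *v x) = (S ** S) *v x" for x by (simp add: matrix_vector_mul_assoc)
  have norm_Sv: "(S *v v) \<bullet> (S *v v) = l * (v \<bullet> v)"
    using inner_matrix_vector_mult_symmetric[OF sym, of v "S *v v"] by (simp add: SS eig)
  show ?thesis
  proof (cases "l < 0")
    case True
    with norm_Sv have "v \<bullet> v = 0"
      by (metis inner_ge_zero mult_less_0_iff order.antisym not_le)
    then show ?thesis by simp
  next
    case False
    define \<mu> where "\<mu> = sqrt l"
    have \<mu>: "0 \<le> \<mu>" "\<mu> * \<mu> = l" using False by (auto simp: \<mu>_def)
    define w where "w = S *v v - \<mu> *\<^sub>R v"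
    have "S *v w + \<mu> *\<^sub>R w = 0"
      using \<mu>(2) by (simp add: w_def SS eig matrix_vector_mult_diff_distrib matrix_vector_mult_scaleR algebra_simps)
    then have "w \<bullet> (S *v w) + \<mu> * (w \<bullet> w) = 0"
      by (metis inner_add_right inner_scaleR_right inner_zero_right)
    then have wSw: "w \<bullet> (S *v w) = 0" and "\<mu> * (w \<bullet> w) = 0"
      using psd[of w] \<mu>(1) by (simp_all add: add_nonneg_eq_0_iff)
    show ?thesis
    proof (cases "\<mu> = 0")
      case True
      have "w \<bullet> w = v \<bullet> (S *v w)"
        using inner_matrix_vector_mult_symmetric[OF sym, of v w] True by (simp add: w_def)
      then have "w = 0" using sym_psd_kernel[OF S wSw] by simp
      then show ?thesis by (simp add: w_def \<mu>_def)
    next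
      case False
      with \<open>\<mu> * (w \<bullet> w) = 0\<close> have "w = 0" by simp
      then show ?thesis by (simp add: w_def \<mu>_def)
    qed
  qed
qed

lemma sym_psd_sqrt_unique:
  fixes S T :: "real^'n^'n"
  assumes S: "sym_psd S" and T: "sym_psd T" and eq: "S ** S = T ** T"
  shows "S = T"
proof -
  have sym: "transpose (S ** S) = S ** S"
    using S by (simp add: sym_psd_def matrix_transpose_mul)
  obtain B where B: "span B = UNIV"
    and eig: "\<And>v. v \<in> B \<Longrightarrow> (S ** S) *v v = (v \<bullet> ((S ** S) *v v)) *\<^sub>R v"
    using symmetric_matrix_eigenbasis[OF sym] by metis
  have "S *v v = T *v v" if "v \<in> B" for v
    using sym_psd_sqrt_on_eigenvector[OF S eig[OF that]]
      sym_psd_sqrt_on_eigenvector[OF T eig[OF that, unfolded eq]]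
    by (simp add: eq)
  then show ?thesis by (rule matrix_eq_on_spanning_set[OF B])
qed

lemma psd_sqrt:
  assumes "sym_psd Q"
  shows "sym_psd (psd_sqrt Q)" "psd_sqrt Q ** psd_sqrt Q = Q"
proof -
  have "\<exists>!S. sym_psd S \<and> S ** S = Q"
    using sym_psd_sqrt_exists[OF assms] sym_psd_sqrt_unique by metis
  then have "sym_psd (psd_sqrt Q) \<and> psd_sqrt Q ** psd_sqrt Q = Q"
    unfolding psd_sqrt_def by (rule theI')
  then show "sym_psd (psd_sqrt Q)" "psd_sqrt Q ** psd_sqrt Q = Q" by auto
qed

lemma norm_psd_sqrt_mult_vec:
  assumes "sym_psd Q"
  shows "(norm (psd_sqrt Q *v x))\<^sup>2 = qform Q x"
proof -
  let ?S = "psd_sqrt Q"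
  have "transpose ?S = ?S" using psd_sqrt(1)[OF assms] by (simp add: sym_psd_def)
  then have "(?S *v x) \<bullet> (?S *v x) = x \<bullet> (?S *v (?S *v x))"
    by (simp add: inner_matrix_vector_mult_symmetric)
  also have "\<dots> = qform Q x"
    by (simp add: qform_def matrix_vector_mul_assoc psd_sqrt(2)[OF assms])
  finally show ?thesis by (simp add: power2_norm_eq_inner)
qed

section \<open>Exactness of the relaxation\<close>

lemma rotated_cone_le_iff:
  fixes s t :: real
  assumes "0 \<le> s"
  shows "sqrt (s + ((t - 1) / 2)\<^sup>2) \<le> (t + 1) / 2 \<longleftrightarrow> s \<le> t"
proof
  assume "sqrt (s + ((t - 1) / 2)\<^sup>2) \<le> (t + 1) / 2"
  then have "s + ((t - 1) / 2)\<^sup>2 \<le> ((t + 1) / 2)\<^sup>2" by (rule sqrt_le_D)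
  then show "s \<le> t" by (simp add: power2_eq_square field_simps)
next
  assume "s \<le> t"
  then have "0 \<le> (t + 1) / 2" "s + ((t - 1) / 2)\<^sup>2 \<le> ((t + 1) / 2)\<^sup>2"
    using assms by (simp_all add: power2_eq_square field_simps)
  then show "sqrt (s + ((t - 1) / 2)\<^sup>2) \<le> (t + 1) / 2"
    by (rule real_le_lsqrt)
qed

lemma psd_cone_constraint_iff:
  assumes "sym_psd Q"
  shows "sqrt ((norm (psd_sqrt Q *v x))\<^sup>2 + ((t - 1) / 2)\<^sup>2) \<le> (t + 1) / 2 \<longleftrightarrow> qform Q x \<le> t"
  using rotated_cone_le_iff[of "qform Q x" t] assms
  by (simp add: norm_psd_sqrt_mult_vec qform_def sym_psd_def)

lemma qform_cong:
  fixes A :: "real^'n^'n"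
  assumes "transpose A = A" "A *v x = A *v y"
  shows "qform A x = qform A y"
  using inner_matrix_vector_mult_symmetric[OF assms(1), of x y] assms(2)
  by (simp add: qform_def inner_commute)

lemma qform_add_sum_kernel_vectors:
  fixes A :: "real^'n^'n"
  assumes "finite J" "transpose A = A" "\<And>j. j \<in> J \<Longrightarrow> j \<noteq> k \<Longrightarrow> A *v e j = 0"
  shows "qform A (x + (\<Sum>j\<in>J. e j)) = (if k \<in> J then qform A (x + e k) else qform A x)"
proof -
  have "A *v (\<Sum>j\<in>J. e j) = (\<Sum>j\<in>J. if j = k then A *v e k else 0)"
    using assms(3) by (auto simp: vec.sum intro: sum.cong)
  then have "A *v (x + (\<Sum>j\<in>J. e j)) = A *v (if k \<in> J then x + e k else x)"
    using assms(1) by (simp add: matrix_vector_right_distrib sum.delta')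
  then show ?thesis
    using qform_cong[OF assms(2)] by (metis (full_types))
qed

lemma kernel_if_orthogonal_to_range:
  fixes A :: "real^'n^'n"
  assumes "transpose A = A" "\<And>y. d \<bullet> (A *v y) = 0"
  shows "A *v d = 0"
  using assms(2)[of "A *v d"] inner_matrix_vector_mult_symmetric[OF assms(1), of d "A *v d"] by simp

lemma quadratic_level_with_sign:
  fixes \<alpha> \<beta> \<gamma> t e :: real
  assumes "0 < \<gamma>" "\<alpha> \<le> t"
  obtains s where "\<alpha> + 2 * s * \<beta> + s\<^sup>2 * \<gamma> = t" "s * e \<le> 0"
proof -
  define r where "r = sqrt (\<beta>\<^sup>2 + \<gamma> * (t - \<alpha>))"
  have disc: "0 \<le> \<beta>\<^sup>2 + \<gamma> * (t - \<alpha>)" using assms by simp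
  have r: "r\<^sup>2 = \<beta>\<^sup>2 + \<gamma> * (t - \<alpha>)" "\<bar>\<beta>\<bar> \<le> r"
    using disc assms unfolding r_def by (auto intro: real_le_rsqrt)
  have level: "\<alpha> + 2 * s * \<beta> + s\<^sup>2 * \<gamma> = t" if "(\<beta> + \<gamma> * s)\<^sup>2 = r\<^sup>2" for s
  proof -
    have "\<gamma> * (\<alpha> + 2 * s * \<beta> + s\<^sup>2 * \<gamma> - t) = (\<beta> + \<gamma> * s)\<^sup>2 - (\<beta>\<^sup>2 + \<gamma> * (t - \<alpha>))"
      by (simp add: power2_eq_square algebra_simps)
    also have "\<dots> = 0" using that r(1) by simp
    finally show ?thesis using assms(1) by simp
  qed
  show thesis
  proof (cases "e \<le> 0")
    case True
    let ?s = "(r - \<beta>) / \<gamma>"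
    show thesis
    proof (rule that)
      show "\<alpha> + 2 * ?s * \<beta> + ?s\<^sup>2 * \<gamma> = t" using assms(1) by (intro level) simp
      have "0 \<le> ?s" using r(2) assms(1) by simp
      then show "?s * e \<le> 0" using True by (rule mult_nonneg_nonpos)
    qed
  next
    case False
    let ?s = "- (r + \<beta>) / \<gamma>"
    show thesis
    proof (rule that)
      show "\<alpha> + 2 * ?s * \<beta> + ?s\<^sup>2 * \<gamma> = t" using assms(1) by (intro level) (simp add: power2_eq_square)
      have "?s \<le> 0" using r(2) assms(1) by (simp add: divide_nonpos_pos)
      then show "?s * e \<le> 0" using False by (intro mult_nonpos_nonneg) auto
    qed
  qed
qed

lemma Jset_subset: "Jset m p a \<subseteq> {1..m}"
  by (auto simp: Jset_def)

lemma gfun_eq_crfun_add: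
  assumes "\<forall>j\<in>Jset m p a. qform (Q j) y = t j"
    and "\<forall>j\<in>{1..m} - Jset m p a. qform (Q j) y = qform (Q j) x"
  shows "gfun m a Q b c i y = crfun m p a Q b c i x t + 2 * (b i \<bullet> (y - x))"
proof -
  have "(\<Sum>j=1..m. a i j * qform (Q j) y)
      = (\<Sum>j\<in>{1..m} - Jset m p a. a i j * qform (Q j) y) + (\<Sum>j\<in>Jset m p a. a i j * qform (Q j) y)"
    using sum.subset_diff[OF Jset_subset] by simp
  also have "\<dots> = (\<Sum>j\<in>{1..m} - Jset m p a. a i j * qform (Q j) x) + (\<Sum>j\<in>Jset m p a. a i j * t j)"
    using assms by simp
  finally show ?thesis
    unfolding gfun_def crfun_def by (simp add: inner_diff_right)
qed

lemma crfun_qform: "crfun m p a Q b c i x (\<lambda>j. qform (Q j) x) = gfun m a Q b c i x"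
  using gfun_eq_crfun_add[of m p a Q x "\<lambda>j. qform (Q j) x" x] by simp

lemma cr_feasible_qform_iff:
  assumes "\<forall>j\<in>{1..m}. sym_psd (Q j)"
  shows "cr_feasible m p a Q b c u x (\<lambda>j. qform (Q j) x) \<longleftrightarrow> qcqp_feasible m p a Q b c u x"
  using assms Jset_subset psd_cone_constraint_iff
  unfolding cr_feasible_def qcqp_feasible_def crfun_qform by fastforce

lemma cr_feasible_qform_le:
  assumes "\<forall>j\<in>{1..m}. sym_psd (Q j)" "cr_feasible m p a Q b c u x t" "j \<in> Jset m p a"
  shows "qform (Q j) x \<le> t j"
  using assms Jset_subset psd_cone_constraint_iff unfolding cr_feasible_def by blast

lemma exists_exclusive_direction:
  fixes Q :: "nat \<Rightarrow> real^'n^'n"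
  assumes psd: "\<forall>i\<in>{1..m}. sym_psd (Q i)" and j: "j \<in> {1..m}"
    and dim: "dim (span (b ` {1..p} \<union> null_sp (Q j) \<union> (\<Union>i\<in>{1..m} - {j}. range_sp (Q i))))
          \<le> CARD('n) - 1"
  obtains d where "\<forall>i\<in>{1..p}. b i \<bullet> d = 0" "\<forall>i\<in>{1..m} - {j}. Q i *v d = 0" "0 < qform (Q j) d"
proof -
  let ?X = "b ` {1..p} \<union> null_sp (Q j) \<union> (\<Union>i\<in>{1..m} - {j}. range_sp (Q i))"
  have "CARD('n) - 1 < CARD('n)" by simp
  then have "dim (span ?X) < DIM(real^'n)" using le_less_trans[OF dim] by simp
  then obtain d where "d \<noteq> 0" and d_orth: "\<And>y. y \<in> span ?X \<Longrightarrow> orthogonal d y"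
    by (metis dim_span orthogonal_to_subspace_exists)
  have orth: "d \<bullet> y = 0" if "y \<in> ?X" for y
    using d_orth[OF span_base[OF that]] by (simp add: orthogonal_def)
  have "\<forall>i\<in>{1..p}. b i \<bullet> d = 0" using orth inner_commute by (metis UnCI imageI)
  moreover have "\<forall>i\<in>{1..m} - {j}. Q i *v d = 0"
  proof
    fix i assume i: "i \<in> {1..m} - {j}"
    have "d \<bullet> (Q i *v y) = 0" for y
    proof (rule orth)
      have "Q i *v y \<in> range_sp (Q i)" by (simp add: range_sp_def)
      then show "Q i *v y \<in> ?X" using i by blast
    qed
    then show "Q i *v d = 0" using psd i by (intro kernel_if_orthogonal_to_range) (auto simp: sym_psd_def)
  qed
  moreover have "0 < qform (Q j) d"
  proof -
    have "d \<notin> null_sp (Q j)"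
    proof
      assume "d \<in> null_sp (Q j)"
      then have "d \<bullet> d = 0" by (intro orth) blast
      with \<open>d \<noteq> 0\<close> show False by simp
    qed
    have Qj: "sym_psd (Q j)" using psd j by blast
    with \<open>d \<notin> null_sp (Q j)\<close> have "qform (Q j) d \<noteq> 0"
      using sym_psd_kernel by (auto simp: null_sp_def qform_def)
    then show ?thesis using Qj by (auto simp: qform_def sym_psd_def less_le)
  qed
  ultimately show thesis by (rule that)
qed

lemma exists_level_direction:
  fixes Q :: "nat \<Rightarrow> real^'n^'n"
  assumes psd: "\<forall>i\<in>{1..m}. sym_psd (Q i)" and j: "j \<in> {1..m}"
    and dim: "dim (span (b ` {1..p} \<union> null_sp (Q j) \<union> (\<Union>i\<in>{1..m} - {j}. range_sp (Q i))))
          \<le> CARD('n) - 1"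
    and le: "qform (Q j) x \<le> t"
  obtains d s where "\<forall>i\<in>{1..p}. b i \<bullet> d = 0" "\<forall>i\<in>{1..m} - {j}. Q i *v d = 0"
    "qform (Q j) (x + s *\<^sub>R d) = t" "s * (b 0 \<bullet> d) \<le> 0"
proof -
  obtain d where d: "\<forall>i\<in>{1..p}. b i \<bullet> d = 0" "\<forall>i\<in>{1..m} - {j}. Q i *v d = 0" "0 < qform (Q j) d"
    using exists_exclusive_direction[OF psd j dim] .
  obtain s where s: "qform (Q j) x + 2 * s * (d \<bullet> (Q j *v x)) + s\<^sup>2 * qform (Q j) d = t"
      "s * (b 0 \<bullet> d) \<le> 0"
    using quadratic_level_with_sign[OF d(3) le] .
  have "transpose (Q j) = Q j" using psd j by (auto simp: sym_psd_def)
  then have "qform (Q j) (x + s *\<^sub>R d) = t"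
    using s(1) by (simp add: qform_def inner_symmetric_add_scaleR)
  with d(1,2) s(2) show thesis using that by blast
qed

lemma cr_feasible_imp_qcqp_feasible_le:
  fixes Q :: "nat \<Rightarrow> real^'n^'n"
  assumes psd: "\<forall>j\<in>{1..m}. sym_psd (Q j)"
    and dim_cond: "\<forall>j\<in>Jset m p a.
        dim (span (b ` {1..p} \<union> null_sp (Q j) \<union> (\<Union>i\<in>{1..m} - {j}. range_sp (Q i))))
          \<le> CARD('n) - 1"
    and feas: "cr_feasible m p a Q b c u x t"
  obtains y where "qcqp_feasible m p a Q b c u y" "gfun m a Q b c 0 y \<le> crfun m p a Q b c 0 x t"
proof -
  let ?J = "Jset m p a"
  have J: "?J \<subseteq> {1..m}" "finite ?J"
    using Jset_subset by (auto intro: finite_subset[OF Jset_subset])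
  have "\<exists>d s. (\<forall>i\<in>{1..p}. b i \<bullet> d = 0) \<and> (\<forall>i\<in>{1..m} - {j}. Q i *v d = 0)
      \<and> qform (Q j) (x + s *\<^sub>R d) = t j \<and> s * (b 0 \<bullet> d) \<le> 0" if j: "j \<in> ?J" for j
  proof -
    obtain d s where "\<forall>i\<in>{1..p}. b i \<bullet> d = 0" "\<forall>i\<in>{1..m} - {j}. Q i *v d = 0"
        "qform (Q j) (x + s *\<^sub>R d) = t j" "s * (b 0 \<bullet> d) \<le> 0"
      using exists_level_direction[OF psd _ _ cr_feasible_qform_le[OF psd feas j]] j J(1) dim_cond
      by blast
    then show ?thesis by blast
  qed
  then obtain d s where ds: "\<And>j. j \<in> ?J \<Longrightarrow> (\<forall>i\<in>{1..p}. b i \<bullet> d j = 0)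
      \<and> (\<forall>i\<in>{1..m} - {j}. Q i *v d j = 0) \<and> qform (Q j) (x + s j *\<^sub>R d j) = t j
      \<and> s j * (b 0 \<bullet> d j) \<le> 0"
    by metis
  define y where "y = x + (\<Sum>j\<in>?J. s j *\<^sub>R d j)"
  have qform_y: "qform (Q k) y = (if k \<in> ?J then qform (Q k) (x + s k *\<^sub>R d k) else qform (Q k) x)"
    if "k \<in> {1..m}" for k
    unfolding y_def using that psd ds
    by (intro qform_add_sum_kernel_vectors J(2)) (auto simp: sym_psd_def matrix_vector_mult_scaleR)
  have b_y: "b i \<bullet> (y - x) = (\<Sum>j\<in>?J. s j * (b i \<bullet> d j))" for i
    by (simp add: y_def inner_sum_right)
  have g_y: "gfun m a Q b c i y = crfun m p a Q b c i x t + 2 * (b i \<bullet> (y - x))" for i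
    using J(1) ds qform_y by (intro gfun_eq_crfun_add) auto
  have "qcqp_feasible m p a Q b c u y"
    using feas ds J(1) unfolding qcqp_feasible_def cr_feasible_def g_y b_y by auto
  moreover have "b 0 \<bullet> (y - x) \<le> 0"
    unfolding b_y using ds by (intro sum_nonpos) auto
  then have "gfun m a Q b c 0 y \<le> crfun m p a Q b c 0 x t"
    unfolding g_y by simp
  ultimately show thesis by (rule that)
qed

theorem theorem3:
  fixes m p :: nat
    and Q :: "nat \<Rightarrow> real^'n^'n"
    and a :: "nat \<Rightarrow> nat \<Rightarrow> real"
    and b :: "nat \<Rightarrow> real^'n"
    and c u :: "nat \<Rightarrow> real"
    and xs :: "real^'n"
  assumes psd: "\<forall>j\<in>{1..m}. sym_psd (Q j)"
    and a_vals: "\<forall>i\<in>{0..p}. \<forall>j\<in>{1..m}. a i j \<in> {-1, 0, 1}"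
    and dim_cond: "\<forall>j\<in>Jset m p a.
        dim (span (b ` {1..p} \<union> null_sp (Q j) \<union> (\<Union>i\<in>{1..m} - {j}. range_sp (Q i))))
          \<le> CARD('n) - 1"
    and bounded: "cr_value m p a Q b c u > -\<infinity>"
  shows "qcqp_solves m p a Q b c u xs \<longleftrightarrow>
         cr_solves m p a Q b c u xs (\<lambda>j. qform (Q j) xs)"
proof
  assume opt: "qcqp_solves m p a Q b c u xs"
  show "cr_solves m p a Q b c u xs (\<lambda>j. qform (Q j) xs)"
    unfolding cr_solves_def cr_feasible_qform_iff[OF psd] crfun_qform
  proof (intro conjI allI impI)
    show "qcqp_feasible m p a Q b c u xs" using opt unfolding qcqp_solves_def by blast
    fix x t assume "cr_feasible m p a Q b c u x t"
    then obtain y where "qcqp_feasible m p a Q b c u y" "gfun m a Q b c 0 y \<le> crfun m p a Q b c 0 x t"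
      by (rule cr_feasible_imp_qcqp_feasible_le[OF psd dim_cond])
    with opt show "gfun m a Q b c 0 xs \<le> crfun m p a Q b c 0 x t"
      unfolding qcqp_solves_def by force
  qed
next
  assume opt: "cr_solves m p a Q b c u xs (\<lambda>j. qform (Q j) xs)"
  show "qcqp_solves m p a Q b c u xs"
    unfolding qcqp_solves_def
  proof (intro conjI allI impI)
    show "qcqp_feasible m p a Q b c u xs"
      using opt unfolding cr_solves_def cr_feasible_qform_iff[OF psd] by blast
    fix x assume "qcqp_feasible m p a Q b c u x"
    then have "cr_feasible m p a Q b c u x (\<lambda>j. qform (Q j) x)"
      by (simp add: cr_feasible_qform_iff[OF psd])
    with opt show "gfun m a Q b c 0 xs \<le> gfun m a Q b c 0 x"
      unfolding cr_solves_def by (metis crfun_qform)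
  qed
qed

end
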